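(* Let $\bm{T} = \{T^1,\ldots,T^M\}$ be an ensemble of $M$ decision trees over an input space $\mathcal{X}$, with $L^m$ the set of leaves of tree $T^m$ and $\nu^m_j$ the value of leaf $l^m_j$, and let $\mathcal{C}:\mathcal{X}\to\{\mathrm{true},\mathrm{false}\}$ be a constraint such that $\mathcal{C}(\bm{x})$ holds for at least one $\bm{x}\in\mathcal{X}$. Consider the search space $S$ whose initial state is $[\,]$ and in which a state $s=[l^1_{i_1},\ldots,l^m_{i_m}]$ at depth $m<M$ has children $$C(s) = \{[l^1_{i_1},\ldots,l^m_{i_m}, l^{m+1}] \mid l^{m+1} \in L^{m+1},\ \mathrm{box}(l^1_{i_1},\ldots,l^m_{i_m},l^{m+1}) \neq \emptyset\},$$ and where only states $s$ accepted by $\mathcal{C}_s$ are retained, with $\mathcal{C}_s(s)=\mathrm{true}$ iff there exists $\bm{x}\in\mathrm{box}(s)$ with $\mathcal{C}(\bm{x})$. For $s=[l^1_{i_1},\ldots,l^m_{i_m}]$ define $$g(s)=\sum_{m'=1}^m \nu^{m'}_{i_{m'}},\qquad h(s)=\sum_{m'=m+1}^M h_{m'}(s),\qquad h_{m'}(s)=\max\{\nu^{m'}_j \mid l^{m'}_j\in L^{m'},\ \mathrm{box}(l^1_{i_1},\ldots,l^m_{i_m},l^{m'}_j)\neq\emptyset\},$$ and $f(s)=g(s)+h(s)$. Run best-first (A* ) search: maintain an OPEN list initialized to $\{[\,]\}$; repeatedly remove a state of maximal $f$-value from OPEN; if it has depth $M$, return it; otherwise add all its children in $C(s)$ that are accepted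 by $\mathcal{C}_s$ to OPEN. Then the search returns a state $s^*$ at depth $M$ which is an output configuration (a max-clique in $\bm{G}$) with $g(s^* ) = \max_{\bm{x}\in\mathcal{X},\ \mathcal{C}(\bm{x})} \bm{T}(\bm{x})$, i.e. it solves the optimization problem $\max_{\bm{x}\in\mathcal{X}} \bm{T}(\bm{x})$ subject to $\mathcal{C}(\bm{x})$.
   Context: Each tree $T^m$ is a binary tree whose internal nodes carry axis-aligned split conditions on the features of an input $\bm{x}\in\mathcal{X}$, and whose leaves carry real values. An input is evaluated by a tree by following split conditions from the root to a unique leaf; the ensemble output $\bm{T}(\bm{x})$ is the sum over trees of the values of the leaves reached by $\bm{x}$. For a leaf $l$, $\mathrm{box}(l)\subseteq\mathcal{X}$ is the set of inputs reaching $l$ (an axis-aligned box); for a collection of leaves (or a search state, viewed as its set of leaves), $\mathrm{box}$ is the intersection of the individual boxes, and $\mathrm{box}([\,])=\mathcal{X}$. An output configuration is a set of $M$ leaves, one per tree, whose boxes have nonempty common intersection. The graph $\bm{G}$ has all leaves as vertices with an edge between leaves of different trees whose boxes intersect; output configurations are exactly the max-cliques of $\bm{G}$ containing one leaf of each tree. For a state at depth $M$, $h=0$. *)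

theory Defs
  imports Complex_Main
begin

text \<open>An internal node Node j t l r carries the axis-aligned split condition  x j <= t :
  inputs satisfying it go to the left subtree l, the others to the right subtree r.\<close>
datatype 'f dtree = Leaf real | Node 'f real "'f dtree" "'f dtree"

fun tree_eval :: "'f dtree \<Rightarrow> ('f \<Rightarrow> real) \<Rightarrow> real" where
  "tree_eval (Leaf v) x = v"
| "tree_eval (Node j t l r) x = (if x j \<le> t then tree_eval l x else tree_eval r x)"

definition ens_eval :: "'f dtree list \<Rightarrow> ('f \<Rightarrow> real) \<Rightarrow> real" where
  "ens_eval Ts x = (\<Sum>m<length Ts. tree_eval (Ts ! m) x)"

text \<open>Leaves of a tree are identified by their path from the root
  (False = left branch, True = right branch).\<close>
fun leaves :: "'f dtree \<Rightarrow> bool list set" where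
  "leaves (Leaf v) = {[]}"
| "leaves (Node j t l r) = Cons False ` leaves l \<union> Cons True ` leaves r"

fun leaf_value :: "'f dtree \<Rightarrow> bool list \<Rightarrow> real" where
  "leaf_value (Leaf v) [] = v"
| "leaf_value (Node j t l r) (False # p) = leaf_value l p"
| "leaf_value (Node j t l r) (True # p) = leaf_value r p"
| "leaf_value _ _ = 0"

fun path_box :: "'f dtree \<Rightarrow> bool list \<Rightarrow> ('f \<Rightarrow> real) set" where
  "path_box (Leaf v) [] = UNIV"
| "path_box (Node j t l r) (False # p) = {x. x j \<le> t} \<inter> path_box l p"
| "path_box (Node j t l r) (True # p) = {x. \<not> x j \<le> t} \<inter> path_box r p"
| "path_box _ _ = {}"

definition leaf_box :: "('f \<Rightarrow> real) set \<Rightarrow> 'f dtree \<Rightarrow> bool list \<Rightarrow> ('f \<Rightarrow> real) set" where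
  "leaf_box X T l = X \<inter> path_box T l"

text \<open>A search state  [l^1,...,l^m]  is a list whose m-th entry (0-based) is a leaf of tree m.
  box of a state = intersection of the boxes of its leaves; box([]) = X.\<close>
definition state_box :: "('f \<Rightarrow> real) set \<Rightarrow> 'f dtree list \<Rightarrow> bool list list \<Rightarrow> ('f \<Rightarrow> real) set" where
  "state_box X Ts s = X \<inter> (\<Inter>m<length s. leaf_box X (Ts ! m) (s ! m))"

definition children :: "('f \<Rightarrow> real) set \<Rightarrow> 'f dtree list \<Rightarrow> bool list list \<Rightarrow> bool list list set" where
  "children X Ts s = {s @ [l] | l. l \<in> leaves (Ts ! length s) \<and> state_box X Ts (s @ [l]) \<noteq> {}}"

definition Cs :: "('f \<Rightarrow> real) set \<Rightarrow> (('f \<Rightarrow> real) \<Rightarrow> bool) \<Rightarrow> 'f dtree list \<Rightarrow> bool list list \<Rightarrow> bool" where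
  "Cs X C Ts s \<longleftrightarrow> (\<exists>x\<in>state_box X Ts s. C x)"

definition g_val :: "'f dtree list \<Rightarrow> bool list list \<Rightarrow> real" where
  "g_val Ts s = (\<Sum>m<length s. leaf_value (Ts ! m) (s ! m))"

definition h_tree :: "('f \<Rightarrow> real) set \<Rightarrow> 'f dtree list \<Rightarrow> bool list list \<Rightarrow> nat \<Rightarrow> real" where
  "h_tree X Ts s m' = Max {leaf_value (Ts ! m') l | l.
      l \<in> leaves (Ts ! m') \<and> state_box X Ts s \<inter> leaf_box X (Ts ! m') l \<noteq> {}}"

definition h_val :: "('f \<Rightarrow> real) set \<Rightarrow> 'f dtree list \<Rightarrow> bool list list \<Rightarrow> real" where
  "h_val X Ts s = (\<Sum>m'\<in>{length s..<length Ts}. h_tree X Ts s m')"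

definition f_val :: "('f \<Rightarrow> real) set \<Rightarrow> 'f dtree list \<Rightarrow> bool list list \<Rightarrow> real" where
  "f_val X Ts s = g_val Ts s + h_val X Ts s"

definition output_config :: "('f \<Rightarrow> real) set \<Rightarrow> 'f dtree list \<Rightarrow> bool list list \<Rightarrow> bool" where
  "output_config X Ts s \<longleftrightarrow> length s = length Ts \<and> (\<forall>m<length Ts. s ! m \<in> leaves (Ts ! m))
     \<and> state_box X Ts s \<noteq> {}"

datatype 'a search_cfg = Open "'a set" | Returned 'a

text \<open>One iteration: remove some state of maximal f-value from OPEN (ties broken arbitrarily);
  return it if it has depth M, otherwise add its children accepted by C_s.\<close>
inductive astar_step :: "('f \<Rightarrow> real) set \<Rightarrow> (('f \<Rightarrow> real) \<Rightarrow> bool) \<Rightarrow> 'f dtree list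
    \<Rightarrow> bool list list search_cfg \<Rightarrow> bool list list search_cfg \<Rightarrow> bool"
  for X C Ts where
  ret: "\<lbrakk> s \<in> OP; \<forall>s'\<in>OP. f_val X Ts s' \<le> f_val X Ts s; length s = length Ts \<rbrakk>
        \<Longrightarrow> astar_step X C Ts (Open OP) (Returned s)"
| expand: "\<lbrakk> s \<in> OP; \<forall>s'\<in>OP. f_val X Ts s' \<le> f_val X Ts s; length s < length Ts \<rbrakk>
        \<Longrightarrow> astar_step X C Ts (Open OP)
              (Open ((OP - {s}) \<union> {c \<in> children X Ts s. Cs X C Ts c}))"

end

theory Submission imports Defs "HOL-Library.Multiset" begin

text \<open>The heuristic is admissible: for every x in box(s) the leaf of tree m' reached by x
  is compatible with s, so T(x) \<le> f(s). An optimal input x* therefore lies in the box of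
  some state on OPEN at every stage, and the f-value of that state bounds the optimum from
  above. A state of depth M removed with maximal f-value has f = g, and g is the value of an
  input satisfying the constraint, so it is optimal. The search terminates because each
  expansion replaces a state by finitely many deeper ones, which decreases the multiset of
  the remaining depths M - |s| of OPEN.\<close>

fun leaf_of :: "'f dtree \<Rightarrow> ('f \<Rightarrow> real) \<Rightarrow> bool list" where
  "leaf_of (Leaf v) x = []"
| "leaf_of (Node j t l r) x = (if x j \<le> t then False # leaf_of l x else True # leaf_of r x)"

lemma leaf_of_in_leaves: "leaf_of T x \<in> leaves T"
  by (induction T) auto

lemma in_path_box_leaf_of: "x \<in> path_box T (leaf_of T x)"
  by (induction T) auto

lemma leaf_of_unique: "p \<in> leaves T \<Longrightarrow> x \<in> path_box T p \<Longrightarrow> p = leaf_of T x"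
  by (induction T arbitrary: p) auto

lemma tree_eval_eq_leaf_value: "tree_eval T x = leaf_value T (leaf_of T x)"
  by (induction T) auto

lemma finite_leaves: "finite (leaves T)"
  by (induction T) auto

definition valid_state :: "'f dtree list \<Rightarrow> bool list list \<Rightarrow> bool" where
  "valid_state Ts s \<longleftrightarrow> (\<forall>m<length s. s ! m \<in> leaves (Ts ! m))"

lemma mem_state_box:
  "x \<in> state_box X Ts s \<longleftrightarrow> x \<in> X \<and> (\<forall>m<length s. x \<in> path_box (Ts ! m) (s ! m))"
  unfolding state_box_def leaf_box_def by auto

lemma mem_state_box_snoc:
  "x \<in> state_box X Ts (s @ [l]) \<longleftrightarrow> x \<in> state_box X Ts s \<and> x \<in> path_box (Ts ! length s) l"
  unfolding mem_state_box by (auto simp: nth_append less_Suc_eq)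

lemma g_val_eq_sum_tree_eval:
  assumes "valid_state Ts s" "x \<in> state_box X Ts s"
  shows "g_val Ts s = (\<Sum>m<length s. tree_eval (Ts ! m) x)"
  unfolding g_val_def
proof (rule sum.cong)
  fix m assume "m \<in> {..<length s}"
  then have "s ! m = leaf_of (Ts ! m) x"
    using assms by (auto simp: valid_state_def mem_state_box intro: leaf_of_unique)
  then show "leaf_value (Ts ! m) (s ! m) = tree_eval (Ts ! m) x"
    by (simp add: tree_eval_eq_leaf_value)
qed simp

lemma tree_eval_le_h_tree:
  assumes "x \<in> state_box X Ts s"
  shows "tree_eval (Ts ! m) x \<le> h_tree X Ts s m"
  unfolding h_tree_def
proof (rule Max_ge)
  let ?T = "Ts ! m"
  have "{leaf_value ?T l | l. l \<in> leaves ?T \<and> state_box X Ts s \<inter> leaf_box X ?T l \<noteq> {}}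
      \<subseteq> leaf_value ?T ` leaves ?T"
    by auto
  then show "finite {leaf_value ?T l | l. l \<in> leaves ?T \<and> state_box X Ts s \<inter> leaf_box X ?T l \<noteq> {}}"
    using finite_leaves finite_subset by blast
  have "x \<in> state_box X Ts s \<inter> leaf_box X ?T (leaf_of ?T x)"
    using assms in_path_box_leaf_of by (auto simp: leaf_box_def mem_state_box)
  then show "tree_eval ?T x
      \<in> {leaf_value ?T l | l. l \<in> leaves ?T \<and> state_box X Ts s \<inter> leaf_box X ?T l \<noteq> {}}"
    using leaf_of_in_leaves tree_eval_eq_leaf_value by blast
qed

lemma ens_eval_le_f_val:
  assumes "valid_state Ts s" "length s \<le> length Ts" "x \<in> state_box X Ts s"
  shows "ens_eval Ts x \<le> f_val X Ts s"
proof -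
  have "ens_eval Ts x
      = (\<Sum>m<length s. tree_eval (Ts ! m) x) + (\<Sum>m\<in>{length s..<length Ts}. tree_eval (Ts ! m) x)"
    unfolding ens_eval_def using assms(2)
    by (metis atLeast0LessThan le0 sum.atLeastLessThan_concat)
  also have "\<dots> \<le> g_val Ts s + h_val X Ts s"
    unfolding g_val_eq_sum_tree_eval[OF assms(1,3)] h_val_def
    by (intro add_left_mono sum_mono tree_eval_le_h_tree[OF assms(3)])
  finally show ?thesis
    by (simp add: f_val_def)
qed

lemma g_val_full_state:
  assumes "valid_state Ts s" "length s = length Ts" "x \<in> state_box X Ts s"
  shows "g_val Ts s = ens_eval Ts x"
  using g_val_eq_sum_tree_eval[OF assms(1,3)] assms(2) by (simp add: ens_eval_def)

lemma f_val_full_state: "length s = length Ts \<Longrightarrow> f_val X Ts s = g_val Ts s"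
  by (simp add: f_val_def h_val_def)

definition leaf_config :: "'f dtree list \<Rightarrow> ('f \<Rightarrow> real) \<Rightarrow> bool list list" where
  "leaf_config Ts x = map (\<lambda>m. leaf_of (Ts ! m) x) [0..<length Ts]"

lemma ens_eval_eq_g_val_leaf_config: "ens_eval Ts x = g_val Ts (leaf_config Ts x)"
  by (simp add: ens_eval_def g_val_def leaf_config_def tree_eval_eq_leaf_value)

lemma finite_ens_eval_values: "finite {ens_eval Ts x | x. P x}"
proof -
  let ?L = "\<Union>m<length Ts. leaves (Ts ! m)"
  have "set (leaf_config Ts x) \<subseteq> ?L" for x
    using leaf_of_in_leaves by (fastforce simp: leaf_config_def)
  then have "{ens_eval Ts x | x. P x} \<subseteq> g_val Ts ` {s. set s \<subseteq> ?L \<and> length s = length Ts}"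
    by (auto simp: ens_eval_eq_g_val_leaf_config leaf_config_def)
  moreover have "finite ?L"
    using finite_leaves by blast
  ultimately show ?thesis
    using finite_lists_length_eq finite_subset by blast
qed

lemma finite_children: "finite (children X Ts s)"
proof -
  have "children X Ts s \<subseteq> (\<lambda>l. s @ [l]) ` leaves (Ts ! length s)"
    unfolding children_def by auto
  then show ?thesis
    using finite_leaves finite_subset by blast
qed

lemma length_children: "c \<in> children X Ts s \<Longrightarrow> length c = Suc (length s)"
  unfolding children_def by auto

lemma valid_state_children: "valid_state Ts s \<Longrightarrow> c \<in> children X Ts s \<Longrightarrow> valid_state Ts c"
  unfolding children_def valid_state_def by (auto simp: nth_append less_Suc_eq)

lemma children_cover_state_box:
  assumes "x \<in> state_box X Ts s"
  shows "\<exists>c\<in>children X Ts s. x \<in> state_box X Ts c"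
proof -
  let ?c = "s @ [leaf_of (Ts ! length s) x]"
  have "x \<in> state_box X Ts ?c"
    using assms by (simp add: mem_state_box_snoc in_path_box_leaf_of)
  moreover have "?c \<in> children X Ts s"
    unfolding children_def using leaf_of_in_leaves calculation by blast
  ultimately show ?thesis by blast
qed

lemma astar_step_exists:
  assumes "finite OP" "OP \<noteq> {}" "\<forall>s\<in>OP. length s \<le> length Ts"
  shows "\<exists>c'. astar_step X C Ts (Open OP) c'"
proof -
  have "Max (f_val X Ts ` OP) \<in> f_val X Ts ` OP"
    using assms(1,2) by (intro Max_in) auto
  then obtain s where "s \<in> OP" "f_val X Ts s = Max (f_val X Ts ` OP)"
    by auto
  then have s: "s \<in> OP" "\<forall>s'\<in>OP. f_val X Ts s' \<le> f_val X Ts s"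
    using assms(1) by simp_all
  then consider "length s = length Ts" | "length s < length Ts"
    using assms(3) by fastforce
  then show ?thesis
    by cases (use astar_step.ret[OF s] astar_step.expand[OF s] in blast)+
qed

definition open_measure :: "nat \<Rightarrow> bool list list set \<Rightarrow> nat multiset" where
  "open_measure M OP = image_mset (\<lambda>s. M - length s) (mset_set OP)"

lemma astar_step_open_measure:
  assumes step: "astar_step X C Ts (Open OP) (Open OP')" and "finite OP"
  shows "finite OP'"
    and "(open_measure (length Ts) OP', open_measure (length Ts) OP) \<in> mult less_than"
proof -
  from step obtain s where s: "s \<in> OP" "length s < length Ts"
    and OP': "OP' = (OP - {s}) \<union> {c \<in> children X Ts s. Cs X C Ts c}"
    by cases auto
  define new where "new = {c \<in> children X Ts s. Cs X C Ts c} - (OP - {s})"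
  let ?d = "\<lambda>s. length Ts - length s"
  have fin_new: "finite new"
    using finite_children[of X Ts s] by (simp add: new_def)
  have OP'_new: "OP' = (OP - {s}) \<union> new"
    by (auto simp: OP' new_def)
  then show "finite OP'"
    using \<open>finite OP\<close> fin_new by simp
  have OP'_measure: "open_measure (length Ts) OP'
      = image_mset ?d (mset_set (OP - {s})) + image_mset ?d (mset_set new)"
    unfolding open_measure_def OP'_new using \<open>finite OP\<close> fin_new
    by (subst mset_set_Union) (auto simp: new_def)
  have OP_measure: "open_measure (length Ts) OP = image_mset ?d (mset_set (OP - {s})) + {#?d s#}"
    unfolding open_measure_def using mset_set.remove[OF \<open>finite OP\<close> s(1)] by simp
  have "\<forall>k\<in>#image_mset ?d (mset_set new). \<exists>j\<in>#{#?d s#}. (k, j) \<in> less_than"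
    using fin_new s(2) by (auto simp: new_def dest!: length_children)
  then show "(open_measure (length Ts) OP', open_measure (length Ts) OP) \<in> mult less_than"
    unfolding OP'_measure OP_measure by (intro one_step_implies_mult) auto
qed

lemma astar_step_from_Open: "astar_step X C Ts c c' \<Longrightarrow> \<exists>OP. c = Open OP"
  by (cases rule: astar_step.cases) auto

lemma astar_no_infinite_run:
  assumes "finite OP\<^sub>0"
  shows "\<not> (\<exists>r. r 0 = Open OP\<^sub>0 \<and> (\<forall>i. astar_step X C Ts (r i) (r (Suc i))))"
proof
  assume "\<exists>r. r 0 = Open OP\<^sub>0 \<and> (\<forall>i. astar_step X C Ts (r i) (r (Suc i)))"
  then obtain r where r0: "r 0 = Open OP\<^sub>0" and run: "\<And>i. astar_step X C Ts (r i) (r (Suc i))"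
    by blast
  define OP where "OP i = (case r i of Open A \<Rightarrow> A | Returned _ \<Rightarrow> {})" for i
  have r_OP: "r i = Open (OP i)" for i
    using astar_step_from_Open[OF run[of i]] by (auto simp: OP_def)
  have fin: "finite (OP i)" for i
  proof (induction i)
    case 0 then show ?case using r0 r_OP[of 0] assms by simp
  next
    case (Suc i) then show ?case using astar_step_open_measure(1) run[of i] r_OP by metis
  qed
  have "(open_measure (length Ts) (OP (Suc i)), open_measure (length Ts) (OP i)) \<in> mult less_than"
    for i
    using astar_step_open_measure(2) run[of i] r_OP fin by metis
  then have "\<exists>f. \<forall>i. (f (Suc i), f i) \<in> mult less_than"
    by (intro exI[of _ "\<lambda>i. open_measure (length Ts) (OP i)"]) blast
  then show False
    using wf_mult[OF wf_less_than] unfolding wf_iff_no_infinite_down_chain by blast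
qed

text \<open>Here xs is a fixed optimal input and opt its value.\<close>

definition astar_inv :: "('f \<Rightarrow> real) set \<Rightarrow> (('f \<Rightarrow> real) \<Rightarrow> bool) \<Rightarrow> 'f dtree list
    \<Rightarrow> ('f \<Rightarrow> real) \<Rightarrow> real \<Rightarrow> bool list list search_cfg \<Rightarrow> bool" where
  "astar_inv X C Ts xs opt c = (case c of
     Open OP \<Rightarrow> finite OP \<and> (\<forall>s\<in>OP. length s \<le> length Ts \<and> valid_state Ts s \<and> Cs X C Ts s)
                \<and> (\<exists>t\<in>OP. xs \<in> state_box X Ts t)
   | Returned s \<Rightarrow> output_config X Ts s \<and> g_val Ts s = opt)"

lemma g_val_eq_Max_if_f_val_maximal:
  assumes s: "valid_state Ts s" "length s = length Ts" "Cs X C Ts s"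
    and t: "valid_state Ts t" "length t \<le> length Ts" "xs \<in> state_box X Ts t"
    and opt: "ens_eval Ts xs = Max {ens_eval Ts x | x. x \<in> X \<and> C x}"
    and "f_val X Ts t \<le> f_val X Ts s"
  shows "g_val Ts s = Max {ens_eval Ts x | x. x \<in> X \<and> C x}"
proof (rule antisym)
  obtain x where x: "x \<in> state_box X Ts s" "C x"
    using s(3) by (auto simp: Cs_def)
  have "g_val Ts s = ens_eval Ts x"
    using g_val_full_state[OF s(1,2) x(1)] .
  also have "\<dots> \<le> Max {ens_eval Ts x | x. x \<in> X \<and> C x}"
    using x finite_ens_eval_values by (intro Max_ge) (auto simp: mem_state_box)
  finally show "g_val Ts s \<le> Max {ens_eval Ts x | x. x \<in> X \<and> C x}" .
  have "Max {ens_eval Ts x | x. x \<in> X \<and> C x} \<le> f_val X Ts t"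
    using ens_eval_le_f_val[OF t] opt by simp
  also have "\<dots> \<le> f_val X Ts s" by fact
  finally show "Max {ens_eval Ts x | x. x \<in> X \<and> C x} \<le> g_val Ts s"
    using f_val_full_state[OF s(2)] by simp
qed

lemma astar_step_preserves_inv:
  assumes opt: "opt = Max {ens_eval Ts x | x. x \<in> X \<and> C x}" "ens_eval Ts xs = opt"
    and "C xs"
    and step: "astar_step X C Ts c c'" and inv: "astar_inv X C Ts xs opt c"
  shows "astar_inv X C Ts xs opt c'"
  using step
proof cases
  case (ret s OP)
  with inv have s: "valid_state Ts s" "Cs X C Ts s"
    by (auto simp: astar_inv_def)
  from ret inv obtain t where "t \<in> OP" "length t \<le> length Ts" "valid_state Ts t"
    "xs \<in> state_box X Ts t"
    by (auto simp: astar_inv_def)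
  then have "g_val Ts s = opt"
    using g_val_eq_Max_if_f_val_maximal[OF s(1) _ s(2)] ret opt by simp
  moreover have "output_config X Ts s"
    using ret s by (auto simp: output_config_def valid_state_def Cs_def)
  ultimately show ?thesis
    using ret by (simp add: astar_inv_def)
next
  case (expand s OP)
  with inv have fin: "finite OP" and s: "valid_state Ts s"
    and OP: "\<forall>s\<in>OP. length s \<le> length Ts \<and> valid_state Ts s \<and> Cs X C Ts s"
    and xs: "\<exists>t\<in>OP. xs \<in> state_box X Ts t"
    by (auto simp: astar_inv_def)
  have "\<exists>c\<in>children X Ts s. Cs X C Ts c \<and> xs \<in> state_box X Ts c"
    if "xs \<in> state_box X Ts s"
    using children_cover_state_box[OF that] \<open>C xs\<close> by (auto simp: Cs_def)
  then have "\<exists>t\<in>OP - {s} \<union> {c \<in> children X Ts s. Cs X C Ts c}. xs \<in> state_box X Ts t"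
    using xs by blast
  moreover have "finite (OP - {s} \<union> {c \<in> children X Ts s. Cs X C Ts c})"
    using fin finite_children[of X Ts s] by auto
  moreover have "length c \<le> length Ts \<and> valid_state Ts c"
    if "c \<in> children X Ts s" for c
    using that expand length_children valid_state_children[OF s] by fastforce
  ultimately show ?thesis
    using expand OP by (auto simp: astar_inv_def)
qed

lemma astar_inv_progress:
  assumes "astar_inv X C Ts xs opt c"
  shows "(\<exists>c'. astar_step X C Ts c c') \<or> (\<exists>s. c = Returned s)"
proof (cases c)
  case (Open OP)
  then show ?thesis
    using assms astar_step_exists[of OP Ts X C] by (auto simp: astar_inv_def)
qed simp

lemma astar_inv_reachable:
  assumes "opt = Max {ens_eval Ts x | x. x \<in> X \<and> C x}" "xs \<in> X" "C xs" "ens_eval Ts xs = opt"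
    and "(astar_step X C Ts)\<^sup>*\<^sup>* (Open {[]}) c"
  shows "astar_inv X C Ts xs opt c"
  using assms(5)
proof induction
  case base
  then show ?case
    using assms(2,3) by (auto simp: astar_inv_def valid_state_def Cs_def mem_state_box)
next
  case (step c c')
  then show ?case
    using astar_step_preserves_inv assms(1,3,4) by blast
qed

theorem theorem2:
  fixes X :: "('f \<Rightarrow> real) set" and C :: "('f \<Rightarrow> real) \<Rightarrow> bool" and Ts :: "'f dtree list"
  assumes "\<exists>x\<in>X. C x"
  shows "(\<forall>c. (astar_step X C Ts)\<^sup>*\<^sup>* (Open {[]}) c \<longrightarrow>
            (\<exists>c'. astar_step X C Ts c c') \<or> (\<exists>s. c = Returned s))
       \<and> \<not> (\<exists>r. r 0 = Open {[]} \<and> (\<forall>i. astar_step X C Ts (r i) (r (Suc i))))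
       \<and> (\<forall>s. (astar_step X C Ts)\<^sup>*\<^sup>* (Open {[]}) (Returned s) \<longrightarrow>
            output_config X Ts s \<and>
            g_val Ts s = Max {ens_eval Ts x | x. x \<in> X \<and> C x})"
proof -
  let ?opt = "Max {ens_eval Ts x | x. x \<in> X \<and> C x}"
  have "?opt \<in> {ens_eval Ts x | x. x \<in> X \<and> C x}"
    using assms finite_ens_eval_values by (intro Max_in) auto
  then obtain xs where xs: "xs \<in> X" "C xs" "ens_eval Ts xs = ?opt"
    by auto
  note inv = astar_inv_reachable[OF refl xs]
  have "output_config X Ts s \<and> g_val Ts s = ?opt"
    if "(astar_step X C Ts)\<^sup>*\<^sup>* (Open {[]}) (Returned s)" for s
    using inv[OF that] by (simp add: astar_inv_def)
  then show ?thesis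
    using astar_inv_progress[OF inv] astar_no_infinite_run[of "{[]}" X C Ts] by blast
qed

end
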